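(* Let $\operatorname{Hi}(z)=\pi^{-1}\int_0^\infty e^{-t^3/3+zt}\,\mathrm dt$ for $z\in\mathbb C$. For all $\theta\in[\pi/2,3\pi/2]$, $x\in\mathbb R$ and $y\ge0$, \[ \big|\operatorname{Hi}(x+e^{\mathrm i\theta}y)\big|\le\operatorname{Hi}(x). \] *)

theory Defs
  imports "HOL-Analysis.Analysis"
begin

definition Hi :: "complex \<Rightarrow> complex" where
  "Hi z = (LINT t:{0..}|lborel. exp (- (complex_of_real t ^ 3) / 3 + z * complex_of_real t)) / complex_of_real pi"

end

theory Submission
  imports Defs
begin

text \<open>Since \<open>|exp w| = exp (Re w)\<close>, the integrand of \<open>Hi z\<close> has modulus
  \<open>exp (-t\<^sup>3/3 + Re z \<cdot> t)\<close>, the integrand of \<open>Hi (Re z)\<close>, which increases with \<open>Re z\<close>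
  because \<open>t \<ge> 0\<close>. Hence \<open>|Hi z| \<le> Hi x\<close> whenever \<open>Re z \<le> x\<close>, and
  \<open>Re (x + e\<^sup>i\<^sup>\<theta> y) = x + y cos \<theta> \<le> x\<close> for \<open>\<theta> \<in> [\<pi>/2, 3\<pi>/2]\<close>, \<open>y \<ge> 0\<close>.\<close>

lemma cubic_exponent_le_linear:
  fixes x t :: real
  assumes t: "0 \<le> t"
  shows "-(t^3)/3 + x*t \<le> (\<bar>x\<bar>+1)*(3*(\<bar>x\<bar>+1)+1) - t"
proof -
  define a where "a = \<bar>x\<bar>+1"
  define b where "b = 3*a+1"
  have a1: "a \<ge> 1" unfolding a_def by simp
  have "(x+1)*t \<le> a*t" unfolding a_def using t by (intro mult_right_mono) auto
  moreover have "a*t - t^3/3 \<le> a*b"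
  proof (cases "t \<le> b")
    case True
    have "a*t \<le> a*b" using True a1 by (intro mult_left_mono) auto
    moreover have "t^3 \<ge> 0" using t by simp
    ultimately show ?thesis by linarith
  next
    case False
    \<comment> \<open>for \<open>t > b\<close> the cubic term dominates: \<open>t\<^sup>2 \<ge> b\<^sup>2 \<ge> 3a\<close>\<close>
    have "t*t \<ge> b*b" using False a1 b_def by (intro mult_mono) auto
    moreover have "b*1 \<le> b*b" using a1 b_def by (intro mult_left_mono) auto
    ultimately have "t*t \<ge> 3*a" using b_def by linarith
    hence "t*(t*t) \<ge> t*(3*a)" using t by (intro mult_left_mono) auto
    moreover have "a*b \<ge> 0" using a1 b_def by simp
    ultimately show ?thesis by (simp add: power3_eq_cube algebra_simps)
  qed
  ultimately show ?thesis unfolding a_def[symmetric] b_def[symmetric] by (simp add: algebra_simps)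
qed

lemma set_integrable_exp_cubic:
  fixes x :: real
  shows "set_integrable lborel {0..} (\<lambda>t. exp (-(t^3)/3 + x*t))"
proof -
  define C where "C = (\<bar>x\<bar>+1)*(3*(\<bar>x\<bar>+1)+1)"
  have "(\<lambda>t. exp C * exp (-1*t)) integrable_on {0..}"
    using integrable_on_cmult_left[OF integrable_on_exp_minus_to_infinity[of 1 0]] by simp
  hence "(\<lambda>t. exp C * exp (-1*t)) absolutely_integrable_on {0..}"
    by (intro nonnegative_absolutely_integrable_1) auto
  hence "set_integrable lborel {0..} (\<lambda>t. exp C * exp (-1*t))"
    unfolding set_integrable_def
    by (subst (asm) integrable_completion)
       (auto intro!: borel_measurable_continuous_on_indicator continuous_intros)
  thus ?thesis
  proof (rule set_integrable_bound)
    show "set_borel_measurable lborel {0..} (\<lambda>t. exp (-(t^3)/3 + x*t))"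
      unfolding set_borel_measurable_def
      by (auto intro!: borel_measurable_continuous_on_indicator continuous_intros)
    have "exp (-(t^3)/3 + x*t) \<le> exp C * exp (-1*t)" if "0 \<le> t" for t
      using cubic_exponent_le_linear[OF that, of x] by (simp add: C_def flip: exp_add)
    thus "AE t in lborel. t \<in> {0..} \<longrightarrow> norm (exp (-(t^3)/3 + x*t)) \<le> norm (exp C * exp (-1*t))"
      by auto
  qed
qed

lemma norm_exp_cubic:
  fixes z :: complex and t :: real
  shows "norm (exp (- (complex_of_real t ^ 3) / 3 + z * complex_of_real t)) = exp (-(t^3)/3 + Re z * t)"
  by (simp add: norm_exp_eq_Re)

lemma set_integrable_exp_cubic_complex:
  fixes z :: complex
  shows "set_integrable lborel {0..} (\<lambda>t. exp (- (complex_of_real t ^ 3) / 3 + z * complex_of_real t))"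
  by (rule set_integrable_bound[OF set_integrable_exp_cubic[of "Re z"]])
     (auto simp: set_borel_measurable_def norm_exp_cubic
           intro!: borel_measurable_continuous_on_indicator continuous_intros)

lemma Hi_of_real:
  fixes x :: real
  shows "Hi (complex_of_real x) = complex_of_real ((LINT t:{0..}|lborel. exp (-(t^3)/3 + x*t)) / pi)"
proof -
  have "exp (- (complex_of_real t ^ 3) / 3 + complex_of_real x * complex_of_real t)
      = complex_of_real (exp (-(t^3)/3 + x*t))" for t
    by (simp flip: exp_of_real)
  thus ?thesis
    unfolding Hi_def by (simp only: set_integral_complex_of_real of_real_divide)
qed

lemma norm_Hi_le:
  fixes z :: complex and x :: real
  assumes "Re z \<le> x"
  shows "cmod (Hi z) \<le> Re (Hi (complex_of_real x))"
proof -
  have "cmod (LINT t:{0..}|lborel. exp (- (complex_of_real t ^ 3) / 3 + z * complex_of_real t))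
      \<le> (LINT t:{0..}|lborel. exp (-(t^3)/3 + Re z * t))"
    using set_integral_norm_bound[OF set_integrable_exp_cubic_complex] by (simp add: norm_exp_cubic)
  also have "\<dots> \<le> (LINT t:{0..}|lborel. exp (-(t^3)/3 + x * t))"
    using assms by (intro set_integral_mono set_integrable_exp_cubic) (auto intro: mult_right_mono)
  finally show ?thesis
    by (subst Hi_of_real) (simp add: Hi_def norm_divide divide_right_mono)
qed

theorem lemma3p3:
  fixes \<theta> x y :: real
  assumes "pi / 2 \<le> \<theta>" and "\<theta> \<le> 3 * pi / 2" and "0 \<le> y"
  shows "cmod (Hi (complex_of_real x + cis \<theta> * complex_of_real y)) \<le> Re (Hi (complex_of_real x))"
proof (rule norm_Hi_le)
  have "0 \<le> cos (\<theta> - pi)"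
    using assms(1,2) by (intro cos_ge_zero) auto
  hence "cos \<theta> \<le> 0" by simp
  thus "Re (complex_of_real x + cis \<theta> * complex_of_real y) \<le> x"
    using assms(3) by (simp add: mult_nonpos_nonneg)
qed

end
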